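(* Let $X\subset Y$ be cubical sets in $\mathbb{R}^d$. Assume there exists a cubical set $Z=\bigcup_{i=1}^m Q_i$, where each $Q_i$ is an elementary cube with $\dim Q_i=d$, such that $Y\setminus X\subset Z$. Then $$\#Y-\#X\le 3^d|Z|,$$ where $|Z|$ is the Lebesgue measure of $Z$.
   Context: An elementary interval is $[l,l+1]$ or $[l]=[l,l]$ with $l\in\mathbb{Z}$; an elementary cube in $\mathbb{R}^d$ is a product of $d$ elementary intervals, and its dimension is the number of nondegenerate factors. A cubical set is a union of elementary cubes. For a cubical set $X$, $\#X$ denotes the number of elementary cubes (of all dimensions) contained in $X$. *)

theory Defs
  imports "HOL-Analysis.Analysis"
begin

text \<open>Points of R^d are vectors of type real^'n, with d = CARD('n).\<close>

definition elem_cube_of :: "('n::finite \<Rightarrow> int) \<Rightarrow> ('n \<Rightarrow> bool) \<Rightarrow> (real^'n) set" where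
  "elem_cube_of l nd = {x. \<forall>i. of_int (l i) \<le> x$i \<and> x$i \<le> of_int (l i) + (if nd i then 1 else 0)}"

definition elementary_cube :: "(real^'n::finite) set \<Rightarrow> bool" where
  "elementary_cube Q \<longleftrightarrow> (\<exists>l nd. Q = elem_cube_of l nd)"

text \<open>Dimension: number of nondegenerate factors (well-defined, since the set
determines the factors).\<close>
definition cube_dim :: "(real^'n::finite) set \<Rightarrow> nat" where
  "cube_dim Q = (THE k. \<exists>l nd. Q = elem_cube_of l nd \<and> k = card {i. nd i})"

definition cubical_set :: "(real^'n::finite) set \<Rightarrow> bool" where
  "cubical_set X \<longleftrightarrow> (\<exists>F. finite F \<and> (\<forall>Q\<in>F. elementary_cube Q) \<and> X = \<Union>F)"

definition num_cubes :: "(real^'n::finite) set \<Rightarrow> nat" where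
  "num_cubes X = card {Q. elementary_cube Q \<and> Q \<subseteq> X}"

end

theory Submission
  imports Defs
begin

text \<open>Every elementary cube Q contained in Y but not in X is a face of one of the full-dimensional
cubes covering Y - X: since X is closed, Q has a point outside X in its relative interior, and an
elementary cube whose relative interior meets a unit cube is one of its at most 3^d faces.
So #Y - #X is at most 3^d times the number of covering unit cubes, which is the measure of
their union because their interiors are disjoint.\<close>

abbreviation unit_cube :: "('n::finite \<Rightarrow> int) \<Rightarrow> (real^'n) set" where
  "unit_cube k \<equiv> elem_cube_of k (\<lambda>_. True)"

lemma elem_cube_of_eq_cbox:
  "elem_cube_of l nd = cbox (\<chi> i. of_int (l i)) (\<chi> i. of_int (l i) + (if nd i then 1 else 0))"
  unfolding elem_cube_of_def by (rule set_eqI) (simp add: mem_box_cart)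

lemma elem_cube_of_subset_bounds:
  assumes "elem_cube_of l nd \<subseteq> elem_cube_of l' nd'"
  shows "l' i \<le> l i \<and> (nd i \<longrightarrow> nd' i)"
proof -
  have "(\<chi> i. of_int (l i)) \<in> elem_cube_of l nd"
    by (auto simp: elem_cube_of_def)
  then have "(\<chi> i. of_int (l i)) \<in> elem_cube_of l' nd'"
    using assms by blast
  then have lower: "real_of_int (l' i) \<le> of_int (l i)"
    by (auto simp: elem_cube_of_def)
  have "(\<chi> i. of_int (l i) + (if nd i then 1 else (0::real))) \<in> elem_cube_of l nd"
    by (auto simp: elem_cube_of_def)
  then have "(\<chi> i. of_int (l i) + (if nd i then 1 else (0::real))) \<in> elem_cube_of l' nd'"
    using assms by blast
  then have "of_int (l i) + (if nd i then 1 else (0::real)) \<le> of_int (l' i) + (if nd' i then 1 else 0)"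
    by (auto simp: elem_cube_of_def)
  with lower show ?thesis
    by (auto split: if_splits)
qed

lemma elem_cube_of_inject:
  "elem_cube_of l nd = elem_cube_of l' nd' \<longleftrightarrow> l = l' \<and> nd = nd'"
  using elem_cube_of_subset_bounds[of l nd l' nd'] elem_cube_of_subset_bounds[of l' nd' l nd]
  by (auto intro!: ext antisym)

lemma cube_dim_elem_cube_of: "cube_dim (elem_cube_of l nd) = card {i. nd i}"
  unfolding cube_dim_def by (rule the_equality) (auto simp: elem_cube_of_inject)

lemma full_dim_elementary_cube_is_unit_cube:
  fixes Q :: "(real^'n::finite) set"
  assumes "elementary_cube Q" and "cube_dim Q = CARD('n)"
  obtains k where "Q = unit_cube k"
proof -
  obtain l nd where Q: "Q = elem_cube_of l nd"
    using assms(1) unfolding elementary_cube_def by blast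
  then have "card {i. nd i} = card (UNIV :: 'n set)"
    using assms(2) by (simp add: cube_dim_elem_cube_of)
  then have "{i. nd i} = UNIV"
    by (metis card_subset_eq finite subset_UNIV)
  then have "nd = (\<lambda>_. True)" by auto
  with Q that show ?thesis by blast
qed

lemma closed_cubical_set: "cubical_set X \<Longrightarrow> closed X"
  unfolding cubical_set_def elementary_cube_def
  by (auto simp: elem_cube_of_eq_cbox intro!: closed_Union)

text \<open>The point is moved towards the centre of the cube, which lies strictly inside every
nondegenerate factor.\<close>
lemma elem_cube_of_relint_approx:
  fixes p :: "real^'n::finite"
  assumes p: "p \<in> elem_cube_of l nd" and e: "e > 0"
  obtains q where "q \<in> elem_cube_of l nd" "dist q p < e"
    "\<And>i. nd i \<Longrightarrow> of_int (l i) < q$i \<and> q$i < of_int (l i) + 1"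
proof -
  define c :: "real^'n" where "c = (\<chi> i. of_int (l i) + (if nd i then 1/2 else 0))"
  define N where "N = norm (c - p)"
  define t where "t = e / (N + e)"
  define q where "q = p + t *\<^sub>R (c - p)"
  have N: "N \<ge> 0" unfolding N_def by simp
  have t: "0 < t" "t \<le> 1" using e N unfolding t_def by auto
  have "t * N = e * N / (N + e)" unfolding t_def by simp
  also have "\<dots> < e" using e N by (simp add: divide_less_eq algebra_simps)
  finally have "dist q p < e" using t by (simp add: q_def dist_norm N_def)
  have q_i: "q$i = (1 - t) * p$i + t * c$i" for i
    by (simp add: q_def algebra_simps)
  have p_i: "of_int (l i) \<le> p$i \<and> p$i \<le> of_int (l i) + (if nd i then 1 else 0)" for i
    using p by (auto simp: elem_cube_of_def)
  have strict: "of_int (l i) < q$i \<and> q$i < of_int (l i) + 1" if "nd i" for i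
  proof -
    have "q$i - of_int (l i) = (1 - t) * (p$i - of_int (l i)) + t / 2"
      "of_int (l i) + 1 - q$i = (1 - t) * (of_int (l i) + 1 - p$i) + t / 2"
      using that by (simp_all add: q_i c_def algebra_simps)
    moreover have "(1 - t) * (p$i - of_int (l i)) \<ge> 0" "(1 - t) * (of_int (l i) + 1 - p$i) \<ge> 0"
      using p_i[of i] t that by simp_all
    ultimately show ?thesis using t by linarith
  qed
  have "of_int (l i) \<le> q$i \<and> q$i \<le> of_int (l i) + (if nd i then 1 else 0)" for i
    using strict[of i] p_i[of i] by (cases "nd i") (auto simp: q_i c_def algebra_simps)
  then have "q \<in> elem_cube_of l nd" by (simp add: elem_cube_of_def)
  with \<open>dist q p < e\<close> strict that show ?thesis by blast
qed

lemma elementary_cube_relint_outside_closed: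
  assumes "closed X" and "\<not> elem_cube_of l nd \<subseteq> X"
  obtains q where "q \<in> elem_cube_of l nd" "q \<notin> X"
    "\<And>i. nd i \<Longrightarrow> of_int (l i) < q$i \<and> q$i < of_int (l i) + 1"
proof -
  obtain p where p: "p \<in> elem_cube_of l nd" "p \<in> - X" using assms(2) by blast
  obtain e where "e > 0" "ball p e \<subseteq> - X"
    using assms(1) p(2) open_contains_ball by blast
  with elem_cube_of_relint_approx[OF p(1)] that show ?thesis
    by (metis ComplD dist_commute mem_ball subsetD)
qed

definition cube_faces :: "('n::finite \<Rightarrow> int) \<Rightarrow> (real^'n) set set" where
  "cube_faces k = {elem_cube_of l nd | l nd.
     \<forall>i. (nd i \<and> l i = k i) \<or> (\<not> nd i \<and> (l i = k i \<or> l i = k i + 1))}"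

lemma elem_cube_of_in_cube_faces:
  assumes "q \<in> unit_cube k" and "q \<in> elem_cube_of l nd"
    and "\<And>i. nd i \<Longrightarrow> of_int (l i) < q$i \<and> q$i < of_int (l i) + 1"
  shows "elem_cube_of l nd \<in> cube_faces k"
proof -
  have "(nd i \<and> l i = k i) \<or> (\<not> nd i \<and> (l i = k i \<or> l i = k i + 1))" for i
  proof -
    have k: "of_int (k i) \<le> q$i" "q$i \<le> of_int (k i) + 1"
      using assms(1) by (auto simp: elem_cube_of_def)
    have l: "of_int (l i) \<le> q$i" "q$i \<le> of_int (l i) + (if nd i then 1 else 0)"
      using assms(2) by (auto simp: elem_cube_of_def)
    show ?thesis
    proof (cases "nd i")
      case True
      with assms(3) k have "real_of_int (l i) < of_int (k i + 1)" "real_of_int (k i) < of_int (l i + 1)"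
        by fastforce+
      then have "l i < k i + 1" "k i < l i + 1" by linarith+
      with True show ?thesis by simp
    next
      case False
      with k l have "real_of_int (k i) \<le> of_int (l i)" "real_of_int (l i) \<le> of_int (k i + 1)"
        by auto
      then have "k i \<le> l i" "l i \<le> k i + 1" by linarith+
      with False show ?thesis by auto
    qed
  qed
  then show ?thesis unfolding cube_faces_def by blast
qed

lemma finite_cube_faces: "finite (cube_faces k)"
proof -
  have "cube_faces k \<subseteq> (\<lambda>(l, nd). elem_cube_of l nd) ` ((PiE UNIV (\<lambda>i. {k i, k i + 1})) \<times> UNIV)"
    unfolding cube_faces_def by force
  then show ?thesis
    by (rule finite_subset) (auto intro!: finite_imageI finite_PiE)
qed

lemma card_cube_faces_le: "card (cube_faces (k::'n::finite \<Rightarrow> int)) \<le> 3 ^ CARD('n)"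
proof -
  let ?codes = "PiE (UNIV::'n set) (\<lambda>_. {0, 1, 2::nat})"
  define face where
    "face f = elem_cube_of (\<lambda>i. k i + (if f i = 2 then 1 else 0)) (\<lambda>i. f i = 0)" for f :: "'n \<Rightarrow> nat"
  have "cube_faces k \<subseteq> face ` ?codes"
  proof
    fix Q assume "Q \<in> cube_faces k"
    then obtain l nd where Q: "Q = elem_cube_of l nd"
      and lnd: "\<forall>i. (nd i \<and> l i = k i) \<or> (\<not> nd i \<and> (l i = k i \<or> l i = k i + 1))"
      unfolding cube_faces_def by blast
    define f where "f i = (if nd i then 0 else if l i = k i then 1 else (2::nat))" for i
    have "f \<in> ?codes" by (simp add: PiE_iff f_def)
    moreover have "face f = Q"
      unfolding face_def Q using lnd by (auto intro!: arg_cong2[where f = elem_cube_of] ext simp: f_def)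
    ultimately show "Q \<in> face ` ?codes" by blast
  qed
  then have "card (cube_faces k) \<le> card (face ` ?codes)"
    by (rule card_mono[rotated]) (auto intro!: finite_PiE)
  also have "\<dots> \<le> card ?codes"
    by (rule card_image_le) (auto intro!: finite_PiE)
  also have "\<dots> = 3 ^ CARD('n)"
    by (simp add: card_PiE numeral_eq_Suc)
  finally show ?thesis .
qed

lemma num_cubes_diff_le_card_cover:
  fixes X Y :: "(real^'n::finite) set"
  assumes "closed X" and "X \<subseteq> Y" and "finite K" and "Y - X \<subseteq> (\<Union>k\<in>K. unit_cube k)"
  shows "num_cubes Y \<le> num_cubes X + card K * 3 ^ CARD('n)"
proof -
  define F where "F = {Q. elementary_cube Q \<and> Q \<subseteq> Y}"
  define G where "G = {Q. elementary_cube Q \<and> Q \<subseteq> X}"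
  have new_faces: "F - G \<subseteq> (\<Union>k\<in>K. cube_faces k)"
  proof
    fix Q assume "Q \<in> F - G"
    then obtain l nd where Q: "Q = elem_cube_of l nd" "Q \<subseteq> Y" "\<not> Q \<subseteq> X"
      unfolding F_def G_def elementary_cube_def by blast
    then obtain q where q: "q \<in> Q" "q \<notin> X"
      "\<And>i. nd i \<Longrightarrow> of_int (l i) < q$i \<and> q$i < of_int (l i) + 1"
      using elementary_cube_relint_outside_closed[OF assms(1)] by metis
    then obtain k where "k \<in> K" "q \<in> unit_cube k"
      using assms(4) Q(2) by blast
    with q Q(1) show "Q \<in> (\<Union>k\<in>K. cube_faces k)"
      using elem_cube_of_in_cube_faces by blast
  qed
  have "card (F - G) \<le> card (\<Union>k\<in>K. cube_faces k)"
    by (rule card_mono[OF _ new_faces]) (simp add: assms(3) finite_cube_faces)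
  also have "\<dots> \<le> (\<Sum>k\<in>K. card (cube_faces k))"
    by (rule card_UN_le[OF assms(3)])
  also have "\<dots> \<le> card K * 3 ^ CARD('n)"
    using sum_mono[of K "\<lambda>k. card (cube_faces k)", OF card_cube_faces_le] by simp
  finally have "card (F - G) \<le> card K * 3 ^ CARD('n)" .
  moreover have "G \<subseteq> F" using assms(2) unfolding F_def G_def by auto
  then have "card F \<le> card G + card (F - G)"
    by (cases "finite F") (auto simp: card_Diff_subset card_mono finite_subset)
  ultimately show ?thesis
    unfolding num_cubes_def F_def[symmetric] G_def[symmetric] by linarith
qed

lemma measure_unit_box:
  "measure lebesgue (box (\<chi> i. real_of_int (k i)) (\<chi> i. real_of_int (k i) + 1) :: (real^'n::finite) set) = 1"
proof -
  let ?l = "(\<chi> i. real_of_int (k i)) :: real^'n" and ?u = "(\<chi> i. real_of_int (k i) + 1) :: real^'n"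
  have unit: "?u - ?l = (\<chi> i. 1)" by (simp add: vec_eq_iff)
  have one: "(\<chi> i. 1) \<bullet> b = (1::real)" if "b \<in> Basis" for b :: "real^'n"
    using that by (auto simp: Basis_vec_def inner_axis)
  have "measure lborel (box ?l ?u) = (\<Prod>b\<in>Basis. (?u - ?l) \<bullet> b)"
  proof (rule measure_lborel_box)
    fix b :: "real^'n" assume "b \<in> Basis"
    then have "(?u - ?l) \<bullet> b = 1" unfolding unit by (rule one)
    then show "?l \<bullet> b \<le> ?u \<bullet> b" by (simp add: inner_diff_left)
  qed
  also have "\<dots> = 1"
    unfolding unit by (rule prod.neutral) (simp add: one)
  finally show ?thesis by (simp add: measure_completion)
qed

text \<open>The open unit boxes inside the cubes are pairwise disjoint, each of measure 1.\<close>
lemma card_le_measure_unit_cubes: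
  assumes "finite K"
  shows "real (card K) \<le> measure lebesgue (\<Union>k\<in>K. unit_cube k :: (real^'n::finite) set)"
proof -
  define B :: "('n \<Rightarrow> int) \<Rightarrow> (real^'n) set" where
    "B k = box (\<chi> i. real_of_int (k i)) (\<chi> i. real_of_int (k i) + 1)" for k
  have "k = k'" if "x \<in> B k" "x \<in> B k'" for x k k'
  proof
    fix i
    have "real_of_int (k i) < of_int (k' i + 1)" "real_of_int (k' i) < of_int (k i + 1)"
      using that by (auto simp: B_def mem_box_cart dest!: spec[of _ i])
    then show "k i = k' i" by linarith
  qed
  then have "pairwise (\<lambda>k k'. negligible (B k \<inter> B k')) K"
    unfolding pairwise_def by (metis disjoint_iff negligible_empty)
  then have "measure lebesgue (\<Union>k\<in>K. B k) = (\<Sum>k\<in>K. measure lebesgue (B k))"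
    by (intro measure_negligible_finite_Union_image assms) (simp add: B_def)
  also have "\<dots> = real (card K)"
    by (simp add: B_def measure_unit_box)
  finally have "measure lebesgue (\<Union>k\<in>K. B k) = real (card K)" .
  moreover have "compact (\<Union>k\<in>K. unit_cube k :: (real^'n) set)"
    using assms by (auto simp: elem_cube_of_eq_cbox intro!: compact_UN)
  then have "measure lebesgue (\<Union>k\<in>K. B k) \<le> measure lebesgue (\<Union>k\<in>K. unit_cube k)"
    by (intro measure_mono_fmeasurable lmeasurable_compact)
      (auto simp: B_def elem_cube_of_eq_cbox mem_box_cart less_imp_le)
  ultimately show ?thesis by simp
qed

theorem lemma3p2:
  fixes X Y :: "(real^'n::finite) set" and Qs :: "nat \<Rightarrow> (real^'n) set" and m :: nat
  assumes "cubical_set X" and "cubical_set Y" and "X \<subseteq> Y"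
    and "\<forall>i\<in>{1..m}. elementary_cube (Qs i) \<and> cube_dim (Qs i) = CARD('n)"
    and "Y - X \<subseteq> (\<Union>i\<in>{1..m}. Qs i)"
  shows "real (num_cubes Y) - real (num_cubes X)
           \<le> 3 ^ CARD('n) * measure lebesgue (\<Union>i\<in>{1..m}. Qs i)"
proof -
  have "\<forall>i\<in>{1..m}. \<exists>k. Qs i = unit_cube k"
    using assms(4) full_dim_elementary_cube_is_unit_cube by metis
  then obtain k where k: "\<forall>i\<in>{1..m}. Qs i = unit_cube (k i)"
    by metis
  define K where "K = k ` {1..m}"
  have Z: "(\<Union>i\<in>{1..m}. Qs i) = (\<Union>j\<in>K. unit_cube j)"
    unfolding K_def using k by auto
  have "finite K" unfolding K_def by simp
  have count: "num_cubes Y \<le> num_cubes X + card K * 3 ^ CARD('n)"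
    using num_cubes_diff_le_card_cover[OF closed_cubical_set[OF assms(1)] assms(3) \<open>finite K\<close>]
      assms(5) Z by simp
  have "real (num_cubes Y) - real (num_cubes X) \<le> 3 ^ CARD('n) * real (card K)"
    using of_nat_mono[OF count, where 'a = real] by (simp add: mult.commute)
  also have "\<dots> \<le> 3 ^ CARD('n) * measure lebesgue (\<Union>i\<in>{1..m}. Qs i)"
    using card_le_measure_unit_cubes[OF \<open>finite K\<close>] Z by simp
  finally show ?thesis .
qed

end
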